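(* Let $u$ be a word of length $n\ge1$. If $\mathrm{per}(u)<n$ then $\mathrm{lseedmax}(u)=n-1$; otherwise $\mathrm{lseedmax}(u)=0$.
   Context: For a nonempty word $x$, $\mathrm{per}(x)$ is the smallest positive integer $p$ with $x_i=x_{i+p}$ for all $1\le i\le|x|-p$. A word $s$ covers $w$ if every position of $w$ lies in some occurrence of $s$ in $w$. A seed of $u$ is a factor $s$ of $u$ such that $u$ is a factor of some word covered by $s$; a left seed is a seed that is a prefix of $u$. $\mathrm{lseedmax}(u)$ is the length of the longest left seed of $u$ that is shorter than $u$, or $0$ if there is none. *)

theory Defs
  imports Main
begin

definition per :: "'a list \<Rightarrow> nat" where
  "per x = (LEAST p. 0 < p \<and> (\<forall>i. i + p < length x \<longrightarrow> x ! i = x ! (i + p)))"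

definition occurs_at :: "'a list \<Rightarrow> 'a list \<Rightarrow> nat \<Rightarrow> bool" where
  "occurs_at s w i \<longleftrightarrow> i + length s \<le> length w \<and> take (length s) (drop i w) = s"

definition covers :: "'a list \<Rightarrow> 'a list \<Rightarrow> bool" where
  "covers s w \<longleftrightarrow> (\<forall>j < length w. \<exists>i. occurs_at s w i \<and> i \<le> j \<and> j < i + length s)"

definition factor :: "'a list \<Rightarrow> 'a list \<Rightarrow> bool" where
  "factor s u \<longleftrightarrow> (\<exists>p q. u = p @ s @ q)"

definition seed :: "'a list \<Rightarrow> 'a list \<Rightarrow> bool" where
  "seed s u \<longleftrightarrow> factor s u \<and> (\<exists>w. covers s w \<and> factor u w)"

definition left_seed :: "'a list \<Rightarrow> 'a list \<Rightarrow> bool" where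
  "left_seed s u \<longleftrightarrow> seed s u \<and> take (length s) u = s"

definition lseedmax :: "'a list \<Rightarrow> nat" where
  "lseedmax u = (if \<exists>s. left_seed s u \<and> length s < length u
                 then Max {length s | s. left_seed s u \<and> length s < length u}
                 else 0)"

end

theory Submission
  imports Defs
begin

text \<open>
  A proper left seed s of u forces a period: take an occurrence of s in the covered
  superword that contains the last letter of u. It cannot start at or before u's start
  (s is shorter than u), so it starts at some shift 0 < d < |u| and covers the rest of u;
  since s is also a prefix of u, d is a period of u.
  Conversely, if u has a period p < |u|, then s = u without its last letter covers
  (u[0..p) @ s), which starts with u: the two occurrences of s at 0 and p overlap
  because p \<le> |s|.
\<close>

definition is_period :: "'a list \<Rightarrow> nat \<Rightarrow> bool" where
  "is_period u p \<longleftrightarrow> 0 < p \<and> (\<forall>i. i + p < length u \<longrightarrow> u ! i = u ! (i + p))"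

lemma per_eq_Least_is_period: "per u = (LEAST p. is_period u p)"
  unfolding per_def is_period_def ..

lemma per_le: "is_period u p \<Longrightarrow> per u \<le> p"
  unfolding per_eq_Least_is_period by (rule Least_le)

lemma is_period_per: "is_period u p \<Longrightarrow> is_period u (per u)"
  unfolding per_eq_Least_is_period by (rule LeastI)

lemma occurs_at_nth: "occurs_at s w i \<Longrightarrow> t < length s \<Longrightarrow> w ! (i + t) = s ! t"
  unfolding occurs_at_def by (metis add.commute nth_drop nth_take le_add2 add_le_mono1 order_trans)

lemma factor_take: "factor (take k u) u"
  unfolding factor_def by (metis append_Nil append_take_drop_id)

lemma factor_if_take_eq: "take (length u) w = u \<Longrightarrow> factor u w"
  unfolding factor_def by (metis append_Nil append_take_drop_id)

lemma covers_if_overlapping_occurrences: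
  assumes "occurs_at s w 0" and "occurs_at s w p" and "p \<le> length s"
    and "length w = p + length s"
  shows "covers s w"
  unfolding covers_def
proof (intro allI impI)
  fix j assume "j < length w"
  then show "\<exists>i. occurs_at s w i \<and> i \<le> j \<and> j < i + length s"
    using assms by (cases "j < length s") auto
qed

lemma take_length_period_shift:
  assumes "is_period u p"
  shows "take (length u) (take p u @ u) = u"
proof (rule nth_equalityI)
  fix x assume "x < length (take (length u) (take p u @ u))"
  then have x: "x < length u" by simp
  show "take (length u) (take p u @ u) ! x = u ! x"
  proof (cases "x < p")
    case True
    then show ?thesis using x by (simp add: nth_append del: take_append)
  next
    case False
    then have "take (length u) (take p u @ u) ! x = u ! (x - p)"
      using x by (simp add: nth_append min_def del: take_append)
    also have "\<dots> = u ! x"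
      using assms x False unfolding is_period_def by (metis le_add_diff_inverse2 not_less)
    finally show ?thesis .
  qed
qed simp

lemma period_less_length_if_left_seed:
  assumes "left_seed s u" and "length s < length u"
  shows "\<exists>d. is_period u d \<and> d < length u"
proof -
  let ?n = "length u" and ?k = "length s"
  have s_prefix: "\<And>t. t < ?k \<Longrightarrow> s ! t = u ! t"
    using assms unfolding left_seed_def by (metis nth_take)
  obtain w where "covers s w" and "factor u w"
    using assms unfolding left_seed_def seed_def by blast
  then obtain p q where w: "w = p @ u @ q"
    unfolding factor_def by blast
  have w_nth: "\<And>t. t < ?n \<Longrightarrow> w ! (length p + t) = u ! t"
    unfolding w by (simp add: nth_append)
  have "length p + ?n - 1 < length w"
    using assms(2) unfolding w by simp
  then obtain i where occ: "occurs_at s w i" and i: "i \<le> length p + ?n - 1" "length p + ?n - 1 < i + ?k"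
    using \<open>covers s w\<close> unfolding covers_def by blast
  define d where "d = i - length p"
  have d: "0 < d" "d < ?n" "?n \<le> d + ?k"
    using i assms(2) unfolding d_def by auto
  have "u ! t = u ! (t + d)" if "t + d < ?n" for t
  proof -
    have "u ! (t + d) = w ! (i + t)"
      using w_nth[of "t + d"] that d unfolding d_def by (simp add: algebra_simps)
    also have "\<dots> = u ! t"
      using occurs_at_nth[OF occ] s_prefix that d(3) by simp
    finally show ?thesis by simp
  qed
  then show ?thesis
    using d unfolding is_period_def by blast
qed

lemma left_seed_butlast_if_per_less:
  assumes "per u < length u"
  shows "left_seed (take (length u - 1) u) u"
proof -
  let ?n = "length u"
  define p where "p = per u"
  define s where "s = take (?n - 1) u"
  define w where "w = take p u @ s"
  have "is_period u ?n"
    using assms unfolding is_period_def by (auto dest: le_less_trans[OF le0])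
  then have period: "is_period u p"
    unfolding p_def by (rule is_period_per)
  then have p: "0 < p" "p < ?n"
    using assms unfolding p_def is_period_def by auto
  have w_take: "w = take (p + (?n - 1)) (take p u @ u)"
    unfolding w_def s_def using p by simp
  have take_w: "take ?n w = u"
  proof -
    have "min ?n (p + (?n - 1)) = ?n" using p by simp
    then show ?thesis unfolding w_take take_take using take_length_period_shift[OF period] by presburger
  qed
  have len: "length s = ?n - 1" "length w = p + (?n - 1)"
    unfolding w_def s_def using p by simp_all
  have "occurs_at s w 0"
    unfolding occurs_at_def using len take_w
    by (simp add: s_def) (metis take_take diff_le_self min.absorb1)
  moreover have "occurs_at s w p"
    unfolding occurs_at_def w_def using len p by simp
  ultimately have "covers s w"
    using len p by (intro covers_if_overlapping_occurrences) auto
  moreover have "factor u w"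
    using take_w by (rule factor_if_take_eq)
  ultimately show ?thesis
    unfolding left_seed_def seed_def s_def using factor_take by auto
qed

theorem lemma3:
  fixes u :: "'a list" and n :: nat
  assumes "length u = n" and "n \<ge> 1"
  shows "lseedmax u = (if per u < n then n - 1 else 0)"
proof (cases "per u < n")
  case True
  let ?S = "{length s | s. left_seed s u \<and> length s < length u}"
  have max: "n - 1 \<in> ?S"
    using left_seed_butlast_if_per_less[of u] True assms
    by (intro CollectI exI[of _ "take (length u - 1) u"]) auto
  have "finite ?S"
    by (rule finite_subset[of _ "{..<length u}"]) auto
  then have "Max ?S = n - 1"
    using max assms by (intro Max_eqI) auto
  then show ?thesis
    unfolding lseedmax_def using True max by auto
next
  case False
  then have "\<nexists>s. left_seed s u \<and> length s < length u"
    using period_less_length_if_left_seed per_le assms by (metis le_less_trans)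
  then show ?thesis
    unfolding lseedmax_def using False by (simp only: if_False)
qed

end
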